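(* Let $K\ge2$ and $T\ge1$. Suppose arms $A_1,A_2,\dots\in[K]$ are chosen by any (possibly randomized, history-dependent) rule, and in each round $t$, given the past and $A_t$, $B_t$ is drawn uniformly from $[K]\setminus\{A_t\}$. Let $Z_t^a=\sum_{s=1}^t\mathbb 1(B_s=a)$. Then \[ \mathbb E\Big[\max_{a\in[K]}Z_{T-1}^a\Big]\le\frac{T-1}{K-1}+\sqrt{\frac T2\ln\!\big(\sqrt T(K-1)\big)}+2\sqrt T . \]
   Context: $[K]=\{1,\dots,K\}$. *)

theory Defs
  imports "HOL-Probability.Probability"
begin

definition Zcount :: "(nat \<Rightarrow> 'w \<Rightarrow> nat) \<Rightarrow> nat \<Rightarrow> nat \<Rightarrow> 'w \<Rightarrow> nat" where
  "Zcount B t a x = card {s \<in> {1..t}. B s x = a}"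

end

theory Submission
  imports Defs
begin

text \<open>
  Write \<open>X\<^sub>s\<^sup>a = \<one>(B\<^sub>s = a) - \<one>(A\<^sub>s \<noteq> a)/(K-1)\<close> (\<open>centered_step\<close>). Since \<open>B\<^sub>s\<close> is uniform on the arms
  other than \<open>A\<^sub>s\<close>, these increments are orthogonal to every event of the past, so
  \<open>N\<^sub>n\<^sup>a = \<Sum>\<^sub>s\<^sub>\<le>\<^sub>n X\<^sub>s\<^sup>a\<close> (\<open>centered_count\<close>) has orthogonal increments and \<open>E (N\<^sub>n\<^sup>a)\<^sup>2 = \<Sum>\<^sub>s E (X\<^sub>s\<^sup>a)\<^sup>2\<close>.
  Summing over the arms, \<open>\<Sum>\<^sub>a (X\<^sub>s\<^sup>a)\<^sup>2 \<le> 3\<close>, hence \<open>\<Sum>\<^sub>a E (N\<^sub>n\<^sup>a)\<^sup>2 \<le> 3n\<close>.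
  Pointwise \<open>Z\<^sub>n\<^sup>a \<le> n/(K-1) + N\<^sub>n\<^sup>a \<le> n/(K-1) + \<Sum>\<^sub>b (N\<^sub>n\<^sup>b)\<^sup>2/(2c) + c/2\<close>, and
  \<open>c = 2\<surd>T\<close> gives \<open>E max\<^sub>a Z\<^sub>T\<^sub>-\<^sub>1\<^sup>a \<le> (T-1)/(K-1) + 2\<surd>T\<close>.
\<close>

lemma le_square_div_add:
  fixes y c :: real
  assumes "c > 0"
  shows "y \<le> y\<^sup>2 / (2 * c) + c / 2"
proof -
  have "2 * c * y \<le> y\<^sup>2 + c\<^sup>2"
    using sum_squares_bound[of y c] by (simp add: power2_eq_square mult_ac)
  then show ?thesis
    using assms by (simp add: field_simps power2_eq_square)
qed

lemma integrable_square_sum: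
  fixes X :: "'i \<Rightarrow> 'a \<Rightarrow> real"
  assumes "\<And>r s. r \<in> I \<Longrightarrow> s \<in> I \<Longrightarrow> integrable M (\<lambda>x. X r x * X s x)"
  shows "integrable M (\<lambda>x. (\<Sum>s\<in>I. X s x)\<^sup>2)"
  using assms by (simp add: power2_eq_square sum_product)

lemma integral_square_sum_orthogonal:
  fixes X :: "'i \<Rightarrow> 'a \<Rightarrow> real"
  assumes "finite I"
    and "\<And>r s. r \<in> I \<Longrightarrow> s \<in> I \<Longrightarrow> integrable M (\<lambda>x. X r x * X s x)"
    and "\<And>r s. r \<in> I \<Longrightarrow> s \<in> I \<Longrightarrow> r \<noteq> s \<Longrightarrow> (\<integral>x. X r x * X s x \<partial>M) = 0"
  shows "(\<integral>x. (\<Sum>s\<in>I. X s x)\<^sup>2 \<partial>M) = (\<Sum>s\<in>I. \<integral>x. (X s x)\<^sup>2 \<partial>M)"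
proof -
  have "(\<integral>x. (\<Sum>s\<in>I. X s x)\<^sup>2 \<partial>M) = (\<Sum>r\<in>I. \<Sum>s\<in>I. \<integral>x. X r x * X s x \<partial>M)"
    using assms(2) by (simp add: power2_eq_square sum_product)
  also have "\<dots> = (\<Sum>r\<in>I. \<Sum>s\<in>I. if r = s then \<integral>x. (X s x)\<^sup>2 \<partial>M else 0)"
    using assms(3) by (intro sum.cong refl) (auto simp: power2_eq_square)
  also have "\<dots> = (\<Sum>s\<in>I. \<integral>x. (X s x)\<^sup>2 \<partial>M)"
    using assms(1) by (simp add: sum.delta)
  finally show ?thesis .
qed

locale uniform_other_arm = prob_space M for M :: "'w measure" +
  fixes F :: "nat \<Rightarrow> 'w measure" and A B :: "nat \<Rightarrow> 'w \<Rightarrow> nat" and K :: nat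
  assumes two_le_K: "K \<ge> 2"
    and filtration: "filtration (space M) F"
    and subalgebra_F: "\<And>t. subalgebra M (F t)"
    and measurable_A_F: "\<And>t. t \<ge> 1 \<Longrightarrow> A t \<in> measurable (F t) (count_space UNIV)"
    and measurable_B_F: "\<And>t. t \<ge> 1 \<Longrightarrow> B t \<in> measurable (F t) (count_space UNIV)"
    and A_range: "\<And>t x. t \<ge> 1 \<Longrightarrow> x \<in> space M \<Longrightarrow> A t x \<in> {1..K}"
    and B_uniform: "\<And>t E a b. t \<ge> 1 \<Longrightarrow> E \<in> sets (F (t - 1)) \<Longrightarrow>
           a \<in> {1..K} \<Longrightarrow> b \<in> {1..K} - {a} \<Longrightarrow>
           measure M {x \<in> E. A t x = a \<and> B t x = b}
             = measure M {x \<in> E. A t x = a} / real (K - 1)"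
begin

lemma one_le_K_minus_1: "real (K - 1) \<ge> 1"
  using two_le_K by simp

lemma inverse_K_minus_1_bounds: "0 \<le> 1 / real (K - 1)" "1 / real (K - 1) \<le> 1"
  using one_le_K_minus_1 by auto

lemma measurable_A [measurable]: "t \<ge> 1 \<Longrightarrow> A t \<in> measurable M (count_space UNIV)"
  using measurable_from_subalg[OF subalgebra_F measurable_A_F] .

lemma measurable_B [measurable]: "t \<ge> 1 \<Longrightarrow> B t \<in> measurable M (count_space UNIV)"
  using measurable_from_subalg[OF subalgebra_F measurable_B_F] .

lemma sets_F_subset: "E \<in> sets (F t) \<Longrightarrow> E \<in> sets M"
  using subalgebra_F[of t] by (auto simp: subalgebra_def)

lemma space_F: "space (F t) = space M"
  using subalgebra_F[of t] by (auto simp: subalgebra_def)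

lemma level_set_in_F:
  assumes "f \<in> measurable (F r) (count_space UNIV)" and "r \<le> t"
  shows "{x \<in> space M. f x = a} \<in> sets (F t)"
proof -
  have "f -` {a} \<inter> space (F r) \<in> sets (F r)"
    using measurable_sets[OF assms(1)] by simp
  then have "{x \<in> space M. f x = a} \<in> sets (F r)"
    by (simp add: space_F vimage_def Int_def conj_commute)
  then show ?thesis
    using filtration.sets_F_mono[OF filtration assms(2)] by auto
qed

lemma sets_restrict_arms:
  assumes "s \<ge> 1" and "E \<in> sets M"
  shows "{x \<in> E. P (A s x) (B s x)} \<in> sets M"
proof -
  have "{x \<in> space M. P (A s x) (B s x)} \<in> sets M"
    using assms(1) by measurable
  moreover have "{x \<in> E. P (A s x) (B s x)} = E \<inter> {x \<in> space M. P (A s x) (B s x)}"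
    using sets.sets_into_space[OF assms(2)] by auto
  ultimately show ?thesis
    using assms(2) by auto
qed

text \<open>
  The uniformity hypothesis only speaks about \<open>b \<noteq> a\<close>, but these \<open>K - 1\<close> cells already
  carry the whole mass of \<open>A\<^sub>s = a\<close>, so \<open>B\<^sub>s \<noteq> A\<^sub>s\<close> almost surely.
\<close>
lemma measure_same_arm_eq_0:
  assumes s: "s \<ge> 1" and E: "E \<in> sets (F (s - 1))" and a: "a \<in> {1..K}"
  shows "measure M {x \<in> E. A s x = a \<and> B s x = a} = 0"
proof -
  have EM: "E \<in> sets M"
    using sets_F_subset[OF E] .
  let ?m = "\<lambda>b. measure M {x \<in> E. A s x = a \<and> B s x = b}"
  have "(\<Sum>b\<in>{1..K}. ?m b) = measure M (\<Union>b\<in>{1..K}. {x \<in> E. A s x = a \<and> B s x = b})"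
    using sets_restrict_arms[OF s EM]
    by (intro finite_measure_finite_Union[symmetric]) (auto simp: disjoint_family_on_def)
  also have "\<dots> \<le> measure M {x \<in> E. A s x = a}"
    using sets_restrict_arms[OF s EM] by (intro finite_measure_mono) auto
  finally have total: "(\<Sum>b\<in>{1..K}. ?m b) \<le> measure M {x \<in> E. A s x = a}" .
  have "(\<Sum>b\<in>{1..K} - {a}. ?m b) = (\<Sum>b\<in>{1..K} - {a}. measure M {x \<in> E. A s x = a} / real (K - 1))"
    using B_uniform[OF s E a] by (intro sum.cong) auto
  also have "\<dots> = measure M {x \<in> E. A s x = a}"
    using a one_le_K_minus_1 by simp
  finally have "(\<Sum>b\<in>{1..K}. ?m b) = ?m a + measure M {x \<in> E. A s x = a}"
    using a by (simp add: sum.remove)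
  with total show ?thesis
    using measure_nonneg[of M "{x \<in> E. A s x = a \<and> B s x = a}"] by linarith
qed

lemma measure_B_eq:
  assumes s: "s \<ge> 1" and E: "E \<in> sets (F (s - 1))" and a: "a \<in> {1..K}"
  shows "measure M {x \<in> E. B s x = a} = measure M {x \<in> E. A s x \<noteq> a} / real (K - 1)"
proof -
  have EM: "E \<in> sets M"
    using sets_F_subset[OF E] .
  have E_space: "E \<subseteq> space M"
    using sets.sets_into_space[OF EM] .
  have "{x \<in> E. B s x = a} = (\<Union>c\<in>{1..K}. {x \<in> E. A s x = c \<and> B s x = a})"
    using A_range[OF s] E_space by auto
  then have "measure M {x \<in> E. B s x = a} = (\<Sum>c\<in>{1..K}. measure M {x \<in> E. A s x = c \<and> B s x = a})"
    using sets_restrict_arms[OF s EM]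
    by (simp, intro finite_measure_finite_Union) (auto simp: disjoint_family_on_def)
  also have "\<dots> = (\<Sum>c\<in>{1..K} - {a}. measure M {x \<in> E. A s x = c \<and> B s x = a})"
    using a measure_same_arm_eq_0[OF s E a] by (simp add: sum.remove)
  also have "\<dots> = (\<Sum>c\<in>{1..K} - {a}. measure M {x \<in> E. A s x = c}) / real (K - 1)"
    using B_uniform[OF s E] a by (simp add: sum_divide_distrib)
  also have "(\<Sum>c\<in>{1..K} - {a}. measure M {x \<in> E. A s x = c}) = measure M {x \<in> E. A s x \<noteq> a}"
  proof -
    have "{x \<in> E. A s x \<noteq> a} = (\<Union>c\<in>{1..K} - {a}. {x \<in> E. A s x = c})"
      using A_range[OF s] E_space by auto
    then show ?thesis
      using sets_restrict_arms[OF s EM]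
      by (simp, intro finite_measure_finite_Union[symmetric]) (auto simp: disjoint_family_on_def)
  qed
  finally show ?thesis .
qed

definition centered_step :: "nat \<Rightarrow> nat \<Rightarrow> 'w \<Rightarrow> real" where
  "centered_step s a x = (if B s x = a then 1 else 0) - (if A s x = a then 0 else 1 / real (K - 1))"

definition centered_count :: "nat \<Rightarrow> nat \<Rightarrow> 'w \<Rightarrow> real" where
  "centered_count n a x = (\<Sum>s\<in>{1..n}. centered_step s a x)"

lemma centered_step_measurable [measurable]: "s \<ge> 1 \<Longrightarrow> centered_step s a \<in> borel_measurable M"
  unfolding centered_step_def by measurable

lemma abs_centered_step_le: "\<bar>centered_step s a x\<bar> \<le> 2"
proof -
  define q where "q = 1 / real (K - 1)"
  have "0 \<le> q" "q \<le> 1"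
    using inverse_K_minus_1_bounds by (simp_all add: q_def)
  then show ?thesis
    unfolding centered_step_def q_def[symmetric] by auto
qed

lemma integrable_indicator_centered_step:
  assumes "s \<ge> 1" and "E \<in> sets M"
  shows "integrable M (\<lambda>x. indicator E x * centered_step s a x)"
proof (rule integrable_const_bound[where B = 2])
  show "AE x in M. norm (indicator E x * centered_step s a x) \<le> 2"
    using abs_centered_step_le by (auto simp: indicator_def)
qed (use assms in measurable)

lemma integrable_centered_step_mult:
  assumes "r \<ge> 1" and "s \<ge> 1"
  shows "integrable M (\<lambda>x. centered_step r a x * centered_step s b x)"
proof (rule integrable_const_bound[where B = 4])
  show "AE x in M. norm (centered_step r a x * centered_step s b x) \<le> 4"
    using mult_mono[OF abs_centered_step_le abs_centered_step_le] by (simp add: abs_mult)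
qed (use assms in measurable)

lemma integral_indicator_centered_step:
  assumes s: "s \<ge> 1" and E: "E \<in> sets (F (s - 1))" and a: "a \<in> {1..K}"
  shows "(\<integral>x. indicator E x * centered_step s a x \<partial>M) = 0"
proof -
  have EM: "E \<in> sets M"
    using sets_F_subset[OF E] .
  have "(\<integral>x. indicator E x * centered_step s a x \<partial>M)
      = (\<integral>x. indicator {x \<in> E. B s x = a} x - indicator {x \<in> E. A s x \<noteq> a} x / real (K - 1) \<partial>M)"
    by (intro Bochner_Integration.integral_cong) (auto simp: centered_step_def indicator_def)
  also have "\<dots> = measure M {x \<in> E. B s x = a} - measure M {x \<in> E. A s x \<noteq> a} / real (K - 1)"
    using sets_restrict_arms[OF s EM, of "\<lambda>_ b. b = a"] sets_restrict_arms[OF s EM, of "\<lambda>c _. c \<noteq> a"]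
      sets.sets_into_space[OF EM]
    by (subst Bochner_Integration.integral_diff) (auto simp: Int_absorb2 less_top[symmetric])
  also have "\<dots> = 0"
    using measure_B_eq[OF assms] by simp
  finally show ?thesis .
qed

text \<open>
  For \<open>r < s\<close>, \<open>X\<^sub>r\<^sup>a = \<one>(B\<^sub>r = a) - q + q \<one>(A\<^sub>r = a)\<close> with \<open>q = 1/(K-1)\<close> is a combination of
  indicators of events in \<open>F (s - 1)\<close>.
\<close>
lemma integral_centered_step_cross:
  assumes r: "1 \<le> r" "r < s" and a: "a \<in> {1..K}"
  shows "(\<integral>x. centered_step r a x * centered_step s a x \<partial>M) = 0"
proof -
  have s: "s \<ge> 1"
    using r by simp
  define q where "q = 1 / real (K - 1)"
  define E\<^sub>B where "E\<^sub>B = {x \<in> space M. B r x = a}"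
  define E\<^sub>A where "E\<^sub>A = {x \<in> space M. A r x = a}"
  have E\<^sub>B: "E\<^sub>B \<in> sets (F (s - 1))"
    unfolding E\<^sub>B_def using level_set_in_F[OF measurable_B_F] r by simp
  have E\<^sub>A: "E\<^sub>A \<in> sets (F (s - 1))"
    unfolding E\<^sub>A_def using level_set_in_F[OF measurable_A_F] r by simp
  have \<Omega>: "space M \<in> sets (F (s - 1))"
    using sets.top[of "F (s - 1)"] by (simp add: space_F)
  have "(\<integral>x. centered_step r a x * centered_step s a x \<partial>M)
      = (\<integral>x. indicator E\<^sub>B x * centered_step s a x - indicator (space M) x * centered_step s a x * q
              + indicator E\<^sub>A x * centered_step s a x * q \<partial>M)"
    by (intro Bochner_Integration.integral_cong refl)
      (auto simp: centered_step_def[of r] q_def E\<^sub>B_def E\<^sub>A_def indicator_def algebra_simps)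
  also have "\<dots> = (\<integral>x. indicator E\<^sub>B x * centered_step s a x \<partial>M)
      - (\<integral>x. indicator (space M) x * centered_step s a x \<partial>M) * q
      + (\<integral>x. indicator E\<^sub>A x * centered_step s a x \<partial>M) * q"
    using integrable_indicator_centered_step[OF s sets_F_subset] E\<^sub>B E\<^sub>A \<Omega> by simp
  also have "\<dots> = 0"
    using integral_indicator_centered_step[OF s _ a] E\<^sub>B E\<^sub>A \<Omega> by simp
  finally show ?thesis .
qed

lemma integrable_centered_count_square: "integrable M (\<lambda>x. (centered_count n a x)\<^sup>2)"
  unfolding centered_count_def by (intro integrable_square_sum integrable_centered_step_mult) auto

lemma integral_centered_count_square:
  assumes a: "a \<in> {1..K}"
  shows "(\<integral>x. (centered_count n a x)\<^sup>2 \<partial>M) = (\<Sum>s\<in>{1..n}. \<integral>x. (centered_step s a x)\<^sup>2 \<partial>M)"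
  unfolding centered_count_def
proof (rule integral_square_sum_orthogonal)
  fix r s assume rs: "r \<in> {1..n}" "s \<in> {1..n}" "r \<noteq> s"
  then consider "r < s" | "s < r"
    by linarith
  then show "(\<integral>x. centered_step r a x * centered_step s a x \<partial>M) = 0"
    using integral_centered_step_cross[of r s a] integral_centered_step_cross[of s r a] rs a
    by cases (auto simp: mult.commute)
qed (auto intro: integrable_centered_step_mult)

text \<open>At most one arm has \<open>B\<^sub>s = a\<close>, and each arm contributes at most \<open>q = 1/(K-1)\<close> otherwise.\<close>
lemma sum_centered_step_square_le: "(\<Sum>a\<in>{1..K}. (centered_step s a x)\<^sup>2) \<le> 3"
proof -
  define q where "q = 1 / real (K - 1)"
  have q: "0 \<le> q" "q \<le> 1" "real K * q \<le> 2"
    using inverse_K_minus_1_bounds two_le_K by (auto simp: q_def divide_le_eq of_nat_diff)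
  have "(\<Sum>a\<in>{1..K}. (centered_step s a x)\<^sup>2) \<le> (\<Sum>a\<in>{1..K}. (if B s x = a then 1 else 0) + q)"
  proof (intro sum_mono)
    fix a
    have "q * q \<le> q"
      using q mult_left_le[of q q] by simp
    then show "(centered_step s a x)\<^sup>2 \<le> (if B s x = a then 1 else 0) + q"
      unfolding centered_step_def q_def[symmetric] using q by (auto simp: power2_eq_square algebra_simps)
  qed
  also have "\<dots> = (if B s x \<in> {1..K} then 1 else 0) + real K * q"
    by (simp add: sum.distrib)
  also have "\<dots> \<le> 3"
    using q by simp
  finally show ?thesis .
qed

lemma sum_integral_centered_count_square_le:
  "(\<Sum>a\<in>{1..K}. \<integral>x. (centered_count n a x)\<^sup>2 \<partial>M) \<le> 3 * real n"
proof -
  have integrable: "integrable M (\<lambda>x. (centered_step s a x)\<^sup>2)" if "s \<ge> 1" for s a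
    using integrable_centered_step_mult[OF that that] by (simp add: power2_eq_square)
  have "(\<Sum>a\<in>{1..K}. \<integral>x. (centered_count n a x)\<^sup>2 \<partial>M)
      = (\<Sum>a\<in>{1..K}. \<Sum>s\<in>{1..n}. \<integral>x. (centered_step s a x)\<^sup>2 \<partial>M)"
    using integral_centered_count_square by simp
  also have "\<dots> = (\<Sum>s\<in>{1..n}. \<Sum>a\<in>{1..K}. \<integral>x. (centered_step s a x)\<^sup>2 \<partial>M)"
    by (rule sum.swap)
  also have "\<dots> = (\<Sum>s\<in>{1..n}. \<integral>x. (\<Sum>a\<in>{1..K}. (centered_step s a x)\<^sup>2) \<partial>M)"
    using integrable by (intro sum.cong refl) (simp add: Bochner_Integration.integral_sum)
  also have "\<dots> \<le> (\<Sum>s\<in>{1..n}. \<integral>x. 3 \<partial>M)"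
    using integrable sum_centered_step_square_le
    by (intro sum_mono integral_mono Bochner_Integration.integrable_sum) auto
  finally show ?thesis
    by (simp add: prob_space)
qed

lemma Zcount_le_centered_count:
  "real (Zcount B n a x) \<le> centered_count n a x + real n / real (K - 1)"
proof -
  have "real (Zcount B n a x) = (\<Sum>s\<in>{1..n}. if B s x = a then 1 else 0)"
    unfolding Zcount_def real_of_card by (simp only: sum.inter_filter[OF finite_atLeastAtMost])
  also have "\<dots> = centered_count n a x + (\<Sum>s\<in>{1..n}. if A s x = a then 0 else 1 / real (K - 1))"
    unfolding centered_count_def centered_step_def by (simp add: sum.distrib[symmetric])
  also have "(\<Sum>s\<in>{1..n}. if A s x = a then 0 else 1 / real (K - 1)) \<le> (\<Sum>s\<in>{1..n}. 1 / real (K - 1))"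
    using inverse_K_minus_1_bounds by (intro sum_mono) auto
  finally show ?thesis
    by simp
qed

lemma integral_Max_Zcount_le:
  assumes c: "c > 0"
  shows "(\<integral>x. Max ((\<lambda>a. real (Zcount B n a x)) ` {1..K}) \<partial>M)
           \<le> real n / real (K - 1) + 3 * real n / (2 * c) + c / 2"
proof -
  define S where "S x = (\<Sum>b\<in>{1..K}. (centered_count n b x)\<^sup>2)" for x
  define G where "G x = real n / real (K - 1) + S x / (2 * c) + c / 2" for x
  have integrable_S: "integrable M S"
    unfolding S_def by (intro Bochner_Integration.integrable_sum integrable_centered_count_square)
  have Max_le: "Max ((\<lambda>a. real (Zcount B n a x)) ` {1..K}) \<le> G x" for x
  proof (subst Max_le_iff, goal_cases)
    case 3
    have "real (Zcount B n a x) \<le> G x" if a: "a \<in> {1..K}" for a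
    proof -
      have "(centered_count n a x)\<^sup>2 \<le> S x"
        unfolding S_def using a by (intro member_le_sum) auto
      then have "(centered_count n a x)\<^sup>2 / (2 * c) \<le> S x / (2 * c)"
        using c by (simp add: divide_right_mono)
      then have "centered_count n a x \<le> S x / (2 * c) + c / 2"
        using le_square_div_add[OF c, of "centered_count n a x"] by linarith
      then show ?thesis
        using Zcount_le_centered_count[of n a x] by (simp add: G_def)
    qed
    then show ?case by auto
  qed (use two_le_K in auto)
  have "(\<integral>x. Max ((\<lambda>a. real (Zcount B n a x)) ` {1..K}) \<partial>M) \<le> (\<integral>x. G x \<partial>M)"
  proof (rule integral_mono'[OF _ Max_le])
    show "integrable M G"
      unfolding G_def using integrable_S by simp
    show "0 \<le> G x" for x
      unfolding G_def S_def using c by (intro add_nonneg_nonneg divide_nonneg_nonneg sum_nonneg) auto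
  qed
  also have "(\<integral>x. G x \<partial>M) = real n / real (K - 1) + (\<integral>x. S x \<partial>M) / (2 * c) + c / 2"
    unfolding G_def using integrable_S by (simp add: prob_space)
  also have "(\<integral>x. S x \<partial>M) \<le> 3 * real n"
    unfolding S_def using sum_integral_centered_count_square_le
    by (simp add: Bochner_Integration.integral_sum integrable_centered_count_square)
  finally show ?thesis
    using c by (simp add: divide_right_mono)
qed

end

theorem mainTheorem7:
  fixes M :: "'w measure" and F :: "nat \<Rightarrow> 'w measure"
    and A B :: "nat \<Rightarrow> 'w \<Rightarrow> nat" and K T :: nat
  assumes "prob_space M"
    and "K \<ge> 2" and "T \<ge> 1"
    and "filtration (space M) F"
    and "\<And>t. subalgebra M (F t)"
    and "\<And>t. t \<ge> 1 \<Longrightarrow> A t \<in> measurable (F t) (count_space UNIV)"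
    and "\<And>t. t \<ge> 1 \<Longrightarrow> B t \<in> measurable (F t) (count_space UNIV)"
    and "\<And>t x. t \<ge> 1 \<Longrightarrow> x \<in> space M \<Longrightarrow> A t x \<in> {1..K}"
    and "\<And>t E a b. t \<ge> 1 \<Longrightarrow> E \<in> sets (F (t - 1)) \<Longrightarrow>
           a \<in> {1..K} \<Longrightarrow> b \<in> {1..K} - {a} \<Longrightarrow>
           measure M {x \<in> E. A t x = a \<and> B t x = b}
             = measure M {x \<in> E. A t x = a} / real (K - 1)"
  shows "(\<integral>x. Max ((\<lambda>a. real (Zcount B (T - 1) a x)) ` {1..K}) \<partial>M)
           \<le> real (T - 1) / real (K - 1)
             + sqrt (real T / 2 * ln (sqrt (real T) * real (K - 1)))
             + 2 * sqrt (real T)"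
proof -
  interpret uniform_other_arm M F A B K
    using assms by (simp add: uniform_other_arm_def uniform_other_arm_axioms_def)
  have sqrt_T: "sqrt (real T) \<ge> 1"
    using assms(3) by simp
  have four_T: "sqrt (real T) * (2 * (2 * sqrt (real T))) = 4 * real T"
    by (simp add: mult.left_commute[of "sqrt (real T)"] flip: mult.assoc)
  have "3 * real (T - 1) \<le> sqrt (real T) * (2 * (2 * sqrt (real T)))"
    unfolding four_T using assms(3) by (simp add: of_nat_diff)
  then have "3 * real (T - 1) / (2 * (2 * sqrt (real T))) \<le> sqrt (real T)"
    using sqrt_T by (simp add: pos_divide_le_eq)
  then have bound: "(\<integral>x. Max ((\<lambda>a. real (Zcount B (T - 1) a x)) ` {1..K}) \<partial>M)
      \<le> real (T - 1) / real (K - 1) + 2 * sqrt (real T)"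
    using integral_Max_Zcount_le[of "2 * sqrt (real T)" "T - 1"] sqrt_T by simp
  have "1 \<le> sqrt (real T) * real (K - 1)"
    using sqrt_T one_le_K_minus_1 by (metis mult_mono' mult_1_left zero_le_one)
  then have "0 \<le> ln (sqrt (real T) * real (K - 1))"
    by (rule ln_ge_zero)
  then show ?thesis
    by (intro order_trans[OF bound]) simp
qed

end
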